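(* Let $1\le p<\infty$ and $f\in BV_p[0,1]$. For every $\varepsilon>0$ there exists $\delta>0$ such that whenever $0\le x_1<x_2<\dots<x_m\le1$ and $|f(x_j)|<\delta$ for all $j\in\{1,\dots,m\}$, one has $\left(\sum_{j=1}^{m-1}|f(x_{j+1})-f(x_j)|^p\right)^{1/p}<\varepsilon$.
   Context: For $1\le p<\infty$, $BV_p[0,1]$ is the set of functions $f:[0,1]\to\mathbb F$ ($\mathbb F\in\{\mathbb R,\mathbb C\}$) with finite total Wiener $p$-variation $\operatorname{Var}_p(f,[0,1]):=\sup\sum_{j=1}^m|f(t_j)-f(t_{j-1})|^p$, the supremum over all partitions $0=t_0<t_1<\dots<t_m=1$. *)

theory Defs
  imports "HOL-Analysis.Analysis"
begin

definition is_partition01 :: "(nat \<Rightarrow> real) \<Rightarrow> nat \<Rightarrow> bool" where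
  "is_partition01 t m \<longleftrightarrow> m \<ge> 1 \<and> t 0 = 0 \<and> t m = 1 \<and> (\<forall>j<m. t j < t (Suc j))"

definition pvar_sum :: "real \<Rightarrow> (real \<Rightarrow> 'a::real_normed_vector) \<Rightarrow> (nat \<Rightarrow> real) \<Rightarrow> nat \<Rightarrow> real" where
  "pvar_sum p f t m = (\<Sum>j=1..m. norm (f (t j) - f (t (j - 1))) powr p)"

definition Var_p :: "real \<Rightarrow> (real \<Rightarrow> 'a::real_normed_vector) \<Rightarrow> ereal" where
  "Var_p p f = (SUP (t, m) \<in> {(t, m). is_partition01 t m}. ereal (pvar_sum p f t m))"

definition BV_p :: "real \<Rightarrow> (real \<Rightarrow> 'a::real_normed_vector) set" where
  "BV_p p = {f. Var_p p f < \<infinity>}"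

definition small_values_small_pvar :: "real \<Rightarrow> (real \<Rightarrow> 'a::real_normed_vector) \<Rightarrow> bool" where
  "small_values_small_pvar p f \<longleftrightarrow>
     (\<forall>\<epsilon>>0. \<exists>\<delta>>0. \<forall>(x :: nat \<Rightarrow> real) (m :: nat).
        (\<forall>j\<in>{1..m}. 0 \<le> x j \<and> x j \<le> 1) \<and> (\<forall>j. 1 \<le> j \<and> j < m \<longrightarrow> x j < x (Suc j)) \<and>
        (\<forall>j\<in>{1..m}. norm (f (x j)) < \<delta>)
        \<longrightarrow> (\<Sum>j=1..m-1. norm (f (x (Suc j)) - f (x j)) powr p) powr (1 / p) < \<epsilon>)"

end

theory Submission
  imports Defs
begin

text \<open>Suppose small values did not force small \<open>p\<close>-variation. Then for some \<open>e > 0\<close> and every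
  \<open>\<delta> > 0\<close> there is a chain of points of \<open>[0,1]\<close> at which \<open>|f| < \<delta>\<close> and whose \<open>p\<close>-variation sum is
  at least \<open>e\<close>. Merge such a chain \<open>A\<close> with a chain \<open>B\<close> on which \<open>|f|\<close> is so much smaller that
  the \<open>O(#A)\<close> steps of \<open>B\<close> broken by the points of \<open>A\<close> are negligible. Every step of \<open>A\<close> either
  survives in the merged chain or is bridged through the first and last point of \<open>B\<close> in between,
  where \<open>f\<close> is tiny, and by convexity of \<open>t \<mapsto> t\<^sup>p\<close> these bridges recover the fraction \<open>4\<^sup>1\<^sup>-\<^sup>p\<close>
  of it. So the merged chain beats \<open>B\<close> by a fixed amount, and iterating gives chains with
  unbounded sums, contradicting \<open>Var\<^sub>p f < \<infinity>\<close>.\<close>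

lemma powr_add_le_two_powr:
  fixes x y p :: real
  assumes "0 \<le> x" "0 \<le> y" "1 \<le> p"
  shows "(x + y) powr p \<le> 2 powr (p - 1) * (x powr p + y powr p)"
proof (cases "x = 0 \<or> y = 0")
  case True
  have "1 \<le> 2 powr (p - 1)" using assms by (intro ge_one_powr_ge_zero) auto
  then have "z powr p \<le> 2 powr (p - 1) * z powr p" for z :: real
    using mult_right_mono[of 1 "2 powr (p - 1)" "z powr p"] by simp
  then show ?thesis using True by auto
next
  case False
  with assms have pos: "0 < x" "0 < y" by auto
  have "((1 - 1/2) *\<^sub>R x + (1/2) *\<^sub>R y) powr p \<le> (1 - 1/2) * x powr p + (1/2) * y powr p"
    by (rule convex_onD[OF powr_convex[OF assms(3)]]) (use pos in auto)
  then have mid: "((x + y) / 2) powr p \<le> (x powr p + y powr p) / 2"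
    by (simp add: field_simps)
  have "(x + y) powr p = (2 * ((x + y) / 2)) powr p"
    by (rule arg_cong[where f = "\<lambda>z. z powr p"]) simp
  also have "\<dots> = 2 powr p * ((x + y) / 2) powr p"
    using pos by (subst powr_mult) auto
  also have "\<dots> \<le> 2 powr p * ((x powr p + y powr p) / 2)"
    using mid by simp
  also have "\<dots> = 2 powr (p - 1) * (x powr p + y powr p)"
    by (simp add: powr_diff)
  finally show ?thesis .
qed

lemma norm_diff_powr_le:
  fixes u v :: "'a::real_normed_vector"
  assumes "norm u < \<delta>" "norm v < \<delta>" "0 \<le> p"
  shows "norm (v - u) powr p \<le> (2 * \<delta>) powr p"
proof -
  have "norm (v - u) \<le> norm v + norm u" by (rule norm_triangle_ineq4)
  with assms show ?thesis by (intro powr_mono2) auto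
qed

lemma norm_diff_powr_le_detour:
  fixes u u' v v' :: "'a::real_normed_vector"
  assumes p: "1 \<le> p" and small: "norm v < \<delta>" "norm v' < \<delta>"
  shows "norm (u' - u) powr p / (2 powr (p - 1))\<^sup>2
           \<le> norm (v - u) powr p + norm (u' - v') powr p + (2 * \<delta>) powr p"
proof -
  define K where "K = 2 powr (p - 1)"
  have K: "1 \<le> K" unfolding K_def using p by (intro ge_one_powr_ge_zero) auto
  have "norm (u' - u) \<le> norm (v - u) + (norm (v' - v) + norm (u' - v'))"
    using norm_triangle_ineq[of "v - u" "(v' - v) + (u' - v')"]
      norm_triangle_ineq[of "v' - v" "u' - v'"] by simp
  then have "norm (u' - u) powr p \<le> (norm (v - u) + (norm (v' - v) + norm (u' - v'))) powr p"
    using p by (intro powr_mono2) auto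
  also have "\<dots> \<le> K * (norm (v - u) powr p + (norm (v' - v) + norm (u' - v')) powr p)"
    unfolding K_def using p by (intro powr_add_le_two_powr) auto
  also have "\<dots> \<le> K * (norm (v - u) powr p + K * (norm (v' - v) powr p + norm (u' - v') powr p))"
    unfolding K_def using p by (intro mult_left_mono add_left_mono powr_add_le_two_powr) auto
  also have "\<dots> \<le> K\<^sup>2 * (norm (v - u) powr p + norm (v' - v) powr p + norm (u' - v') powr p)"
    using K mult_right_mono[of K "K * K" "norm (v - u) powr p"] mult_right_mono[of 1 K K]
    by (simp add: power2_eq_square algebra_simps)
  also have "\<dots> \<le> K\<^sup>2 * (norm (v - u) powr p + (2 * \<delta>) powr p + norm (u' - v') powr p)"
    using small p by (intro mult_left_mono add_right_mono add_left_mono norm_diff_powr_le) auto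
  finally show ?thesis using K unfolding K_def[symmetric] by (simp add: field_simps)
qed

fun chain_pvar :: "real \<Rightarrow> (real \<Rightarrow> 'a::real_normed_vector) \<Rightarrow> real list \<Rightarrow> real" where
  "chain_pvar p f (x # y # xs) = norm (f y - f x) powr p + chain_pvar p f (y # xs)"
| "chain_pvar p f _ = 0"

lemma chain_pvar_conv_sum:
  "chain_pvar p f xs = (\<Sum>i<length xs - 1. norm (f (xs ! Suc i) - f (xs ! i)) powr p)"
  by (induction p f xs rule: chain_pvar.induct) (simp_all add: sum.lessThan_Suc_shift del: sum.lessThan_Suc)

lemma chain_pvar_append:
  "chain_pvar p f (xs @ ys) = chain_pvar p f xs + chain_pvar p f ys +
     (if xs = [] \<or> ys = [] then 0 else norm (f (hd ys) - f (last xs)) powr p)"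
proof (induction xs)
  case (Cons x xs)
  then show ?case by (cases xs; cases ys) auto
qed simp

lemma chain_pvar_append_ge: "chain_pvar p f xs + chain_pvar p f ys \<le> chain_pvar p f (xs @ ys)"
  by (simp add: chain_pvar_append)

lemma chain_pvar_Cons_ge: "chain_pvar p f ys \<le> chain_pvar p f (x # ys)"
  using chain_pvar_append_ge[of p f "[x]" ys] by simp

lemma chain_pvar_append_le:
  assumes "0 \<le> p" "\<forall>z\<in>set (xs @ ys). norm (f z) < \<delta>"
  shows "chain_pvar p f (xs @ ys) \<le> chain_pvar p f xs + chain_pvar p f ys + (2 * \<delta>) powr p"
  using assms by (auto simp: chain_pvar_append intro!: norm_diff_powr_le)

lemma chain_pvar_Cons_le:
  assumes "0 \<le> p" "\<forall>z\<in>set (x # ys). norm (f z) < \<delta>"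
  shows "chain_pvar p f (x # ys) \<le> chain_pvar p f ys + (2 * \<delta>) powr p"
  using chain_pvar_append_le[of p "[x]" ys f \<delta>] assms by simp

lemma chain_pvar_remdups_adj: "chain_pvar p f (remdups_adj xs) = chain_pvar p f xs"
proof (induction xs rule: remdups_adj.induct)
  case (3 x y xs)
  show ?case
  proof (cases "x = y")
    case False
    then have "chain_pvar p f (remdups_adj (x # y # xs))
                 = chain_pvar p f (x # y # tl (remdups_adj (y # xs)))"
      by simp
    also have "\<dots> = norm (f y - f x) powr p + chain_pvar p f (remdups_adj (y # xs))"
      by (subst chain_pvar.simps(1)) (simp only: remdups_adj_Cons_alt)
    finally show ?thesis using 3 False by simp
  qed (use 3 in simp)
qed simp_all

lemma strict_sorted_eqI:
  fixes xs ys :: "'a::linorder list"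
  assumes "sorted_wrt (<) xs" "sorted_wrt (<) ys" "set xs = set ys"
  shows "xs = ys"
  using assms sorted_distinct_set_unique strict_sorted_iff by blast

lemma strict_sorted_remdups_adj:
  fixes xs :: "'a::linorder list"
  assumes "sorted xs"
  shows "sorted_wrt (<) (remdups_adj xs)"
  using assms
proof (induction xs rule: remdups_adj.induct)
  case (3 x y xs)
  then show ?case by (cases "x = y") (auto simp: less_le)
qed simp_all

lemma chain_pvar_le_split_at:
  fixes f :: "real \<Rightarrow> 'a::real_normed_vector"
  assumes p: "0 \<le> p" and B: "sorted_wrt (<) B" and small: "\<forall>z\<in>set B. norm (f z) < \<delta>"
  shows "chain_pvar p f B \<le> chain_pvar p f (filter (\<lambda>x. x < c) B)
           + chain_pvar p f (filter (\<lambda>x. c < x) B) + 2 * (2 * \<delta>) powr p"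
proof -
  have split: "B = filter (\<lambda>x. x < c) B @ filter (\<lambda>x. c \<le> x) B"
    using B by (intro strict_sorted_eqI) (auto simp: sorted_wrt_append sorted_wrt_filter)
  have "chain_pvar p f (filter (\<lambda>x. c \<le> x) B)
          \<le> chain_pvar p f (filter (\<lambda>x. c < x) B) + (2 * \<delta>) powr p"
  proof (cases "c \<in> set B")
    case True
    then have "filter (\<lambda>x. c \<le> x) B = c # filter (\<lambda>x. c < x) B"
      using B by (intro strict_sorted_eqI) (auto simp: sorted_wrt_filter)
    then show ?thesis
      using True p small by (auto intro!: chain_pvar_Cons_le)
  next
    case False
    then have "filter (\<lambda>x. c \<le> x) B = filter (\<lambda>x. c < x) B"
      by (intro filter_cong) (auto simp: le_less)
    then show ?thesis by simp
  qed
  moreover have "chain_pvar p f B \<le> chain_pvar p f (filter (\<lambda>x. x < c) B)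
                   + chain_pvar p f (filter (\<lambda>x. c \<le> x) B) + (2 * \<delta>) powr p"
    using p small by (subst split) (intro chain_pvar_append_le, auto)
  ultimately show ?thesis by simp
qed

lemma chain_pvar_detour_ge:
  fixes f :: "real \<Rightarrow> 'a::real_normed_vector"
  assumes p: "1 \<le> p" and small: "\<forall>z\<in>set B. norm (f z) < \<delta>"
  shows "chain_pvar p f B + chain_pvar p f (a' # C) + norm (f a' - f a) powr p / (2 powr (p - 1))\<^sup>2
           - (2 * \<delta>) powr p \<le> chain_pvar p f (a # B @ a' # C)"
proof (cases "B = []")
  case True
  have "1 \<le> (2 powr (p - 1))\<^sup>2"
    using p by (intro one_le_power ge_one_powr_ge_zero) auto
  then have "norm (f a' - f a) powr p / (2 powr (p - 1))\<^sup>2 \<le> norm (f a' - f a) powr p"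
    by (simp add: divide_le_eq mult_le_cancel_left1)
  then show ?thesis using True by (simp add: diff_le_eq add_increasing2)
next
  case False
  have "chain_pvar p f (a # B @ a' # C)
          = chain_pvar p f (a # B) + chain_pvar p f (a' # C) + norm (f a' - f (last B)) powr p"
    using chain_pvar_append[of p f "a # B" "a' # C"] False by simp
  moreover have "chain_pvar p f (a # B) = norm (f (hd B) - f a) powr p + chain_pvar p f B"
    using False by (cases B) auto
  moreover have "norm (f a' - f a) powr p / (2 powr (p - 1))\<^sup>2
      \<le> norm (f (hd B) - f a) powr p + norm (f a' - f (last B)) powr p + (2 * \<delta>) powr p"
    using False small by (intro norm_diff_powr_le_detour p) auto
  ultimately show ?thesis by simp
qed

lemma chain_pvar_merge_ge:
  fixes f :: "real \<Rightarrow> 'a::real_normed_vector"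
  assumes p: "1 \<le> p"
    and "\<forall>z\<in>set B. norm (f z) < \<delta>"
    and "sorted_wrt (<) A" "sorted_wrt (<) B" "sorted_wrt (<) M" "set M = set A \<union> set B"
  shows "chain_pvar p f B + chain_pvar p f A / (2 powr (p - 1))\<^sup>2
           - 5 * real (length A) * (2 * \<delta>) powr p \<le> chain_pvar p f M"
  using assms(2-)
proof (induction A arbitrary: B M rule: induct_list012)
  case 1
  then have "M = B" by (intro strict_sorted_eqI) auto
  then show ?case by simp
next
  case (2 a)
  define B1 where "B1 = filter (\<lambda>x. x < a) B"
  define B2 where "B2 = filter (\<lambda>x. a < x) B"
  have "M = B1 @ a # B2"
    using "2.prems" by (intro strict_sorted_eqI)
      (auto simp: B1_def B2_def sorted_wrt_append sorted_wrt_filter)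
  then have "chain_pvar p f B1 + chain_pvar p f B2 \<le> chain_pvar p f M"
    using chain_pvar_append_ge[of p f B1 "a # B2"] chain_pvar_Cons_ge[of p f B2 a] by simp
  moreover have "chain_pvar p f B \<le> chain_pvar p f B1 + chain_pvar p f B2 + 2 * (2 * \<delta>) powr p"
    unfolding B1_def B2_def using p "2.prems" by (intro chain_pvar_le_split_at) auto
  ultimately show ?case by simp (use powr_ge_zero[of "2 * \<delta>" p] in linarith)
next
  case (3 a a' A)
  define E where "E = (2 * \<delta>) powr p"
  define B1 where "B1 = filter (\<lambda>x. x < a) B"
  define B' where "B' = filter (\<lambda>x. a < x) B"
  define B2 where "B2 = filter (\<lambda>x. x < a') B'"
  define B3 where "B3 = filter (\<lambda>x. a' < x) B'"
  define M' where "M' = filter (\<lambda>x. a' < x) M"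
  have order: "a < a'" "\<forall>x\<in>set A. a < x \<and> a' < x" using "3.prems"(2) by auto
  have sorted: "sorted_wrt (<) B'" "sorted_wrt (<) B3" "sorted_wrt (<) M'"
    using "3.prems" by (auto simp: B'_def B3_def M'_def sorted_wrt_filter)
  have small: "\<forall>z\<in>set B'. norm (f z) < \<delta>" "\<forall>z\<in>set B3. norm (f z) < \<delta>"
    using "3.prems"(1) by (auto simp: B'_def B3_def)
  have M: "M = B1 @ a # B2 @ a' # M'"
    using "3.prems" order by (intro strict_sorted_eqI)
      (auto simp: B1_def B2_def B'_def M'_def sorted_wrt_append sorted_wrt_filter)
  have "chain_pvar p f B1 + chain_pvar p f (a # B2 @ a' # M') \<le> chain_pvar p f M"
    unfolding M by (rule chain_pvar_append_ge)
  moreover have "chain_pvar p f B2 + chain_pvar p f (a' # M') + norm (f a' - f a) powr p / (2 powr (p - 1))\<^sup>2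
      - E \<le> chain_pvar p f (a # B2 @ a' # M')"
    unfolding E_def using small by (intro chain_pvar_detour_ge p) (auto simp: B2_def)
  moreover have "chain_pvar p f B3 + chain_pvar p f (a' # A) / (2 powr (p - 1))\<^sup>2
      - 5 * real (length (a' # A)) * E \<le> chain_pvar p f (a' # M')"
    unfolding E_def using "3.prems" sorted small order
    by (intro "3.IH"(2)) (auto simp: B3_def B'_def M'_def sorted_wrt_append)
  moreover have "chain_pvar p f B \<le> chain_pvar p f B1 + chain_pvar p f B' + 2 * E"
    unfolding B1_def B'_def E_def using p "3.prems" by (intro chain_pvar_le_split_at) auto
  moreover have "chain_pvar p f B' \<le> chain_pvar p f B2 + chain_pvar p f B3 + 2 * E"
    unfolding B2_def B3_def E_def using p sorted small by (intro chain_pvar_le_split_at) auto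
  moreover have "chain_pvar p f (a # a' # A) = norm (f a' - f a) powr p + chain_pvar p f (a' # A)"
    by simp
  ultimately show ?case unfolding E_def[symmetric]
    by (simp add: add_divide_distrib algebra_simps)
qed

lemma strict_sorted_map_upt:
  fixes x :: "nat \<Rightarrow> 'a::linorder"
  assumes "\<forall>j. 1 \<le> j \<and> j < m \<longrightarrow> x j < x (Suc j)"
  shows "sorted_wrt (<) (map x [1..<Suc m])"
  unfolding sorted_wrt_iff_nth_Suc_transp[OF transp_on_less]
  using assms by (simp del: upt_Suc)

lemma chain_pvar_map_upt:
  "chain_pvar p f (map x [1..<Suc m]) = (\<Sum>j=1..m-1. norm (f (x (Suc j)) - f (x j)) powr p)"
  by (simp add: chain_pvar_conv_sum sum.atLeast1_atMost_eq del: upt_Suc)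

lemma chain_pvar_le_Var_p:
  fixes f :: "real \<Rightarrow> 'a::real_normed_vector"
  assumes "sorted_wrt (<) L" "set L \<subseteq> {0..1}"
  shows "ereal (chain_pvar p f L) \<le> Var_p p f"
proof -
  \<comment> \<open>repeated points contribute nothing, so \<open>0\<close> and \<open>1\<close> can be added even if already in \<open>L\<close>\<close>
  define P where "P = remdups_adj (0 # L @ [1])"
  have "sorted (0 # L @ [1])"
    using assms by (auto simp: strict_sorted_iff sorted_append)
  then have P_sorted: "sorted_wrt (<) P"
    unfolding P_def by (rule strict_sorted_remdups_adj)
  have "{0, 1} \<subseteq> set P" by (simp add: P_def)
  then have "2 \<le> length P"
    using card_mono[OF finite_set \<open>{0, 1} \<subseteq> set P\<close>] card_length[of P] by simp
  moreover have "P ! 0 = 0" "P ! (length P - 1) = 1"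
    using \<open>2 \<le> length P\<close> hd_conv_nth[of P] last_conv_nth[of P] by (auto simp: P_def)
  ultimately have "is_partition01 (\<lambda>j. P ! j) (length P - 1)"
    using P_sorted by (auto simp: is_partition01_def intro: sorted_wrt_nth_less)
  have "chain_pvar p f L \<le> chain_pvar p f (0 # L @ [1])"
    using chain_pvar_Cons_ge[of p f "L @ [1]" 0] chain_pvar_append_ge[of p f L "[1]"] by simp
  also have "\<dots> = chain_pvar p f P"
    unfolding P_def by (rule chain_pvar_remdups_adj[symmetric])
  also have "\<dots> = pvar_sum p f (\<lambda>j. P ! j) (length P - 1)"
    by (simp add: chain_pvar_conv_sum pvar_sum_def sum.atLeast1_atMost_eq)
  finally have "ereal (chain_pvar p f L) \<le> ereal (pvar_sum p f (\<lambda>j. P ! j) (length P - 1))"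
    by simp
  also have "\<dots> \<le> Var_p p f"
    unfolding Var_p_def using \<open>is_partition01 _ _\<close>
    by (intro SUP_upper2[of "((\<lambda>j. P ! j), length P - 1)"]) auto
  finally show ?thesis .
qed

definition small_valued_chain :: "(real \<Rightarrow> 'a::real_normed_vector) \<Rightarrow> real \<Rightarrow> real list \<Rightarrow> bool" where
  "small_valued_chain f \<delta> L \<longleftrightarrow>
     sorted_wrt (<) L \<and> set L \<subseteq> {0..1} \<and> (\<forall>z\<in>set L. norm (f z) < \<delta>)"

lemma small_valued_chains_with_large_pvar:
  fixes f :: "real \<Rightarrow> 'a::real_normed_vector"
  assumes p: "0 < p" and "\<not> small_values_small_pvar p f"
  obtains e where "0 < e" "\<And>\<delta>. 0 < \<delta> \<Longrightarrow> \<exists>L. small_valued_chain f \<delta> L \<and> e \<le> chain_pvar p f L"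
proof -
  from assms(2) obtain \<epsilon> where \<epsilon>: "0 < \<epsilon>" and fails: "\<forall>\<delta>>0. \<exists>(x :: nat \<Rightarrow> real) m.
        (\<forall>j\<in>{1..m}. 0 \<le> x j \<and> x j \<le> 1) \<and> (\<forall>j. 1 \<le> j \<and> j < m \<longrightarrow> x j < x (Suc j)) \<and>
        (\<forall>j\<in>{1..m}. norm (f (x j)) < \<delta>) \<and>
        \<not> (\<Sum>j=1..m-1. norm (f (x (Suc j)) - f (x j)) powr p) powr (1 / p) < \<epsilon>"
    unfolding small_values_small_pvar_def by force
  show thesis
  proof (rule that)
    show "0 < \<epsilon> powr p" using \<epsilon> by simp
    fix \<delta> :: real assume "0 < \<delta>"
    then obtain x m where x: "\<forall>j\<in>{1..m}. 0 \<le> x j \<and> x j \<le> 1" "\<forall>j. 1 \<le> j \<and> j < m \<longrightarrow> x j < x (Suc j)"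
        "\<forall>j\<in>{1..m}. norm (f (x j)) < \<delta>"
        "\<not> (\<Sum>j=1..m-1. norm (f (x (Suc j)) - f (x j)) powr p) powr (1 / p) < \<epsilon>"
      using fails by blast
    then have large: "\<epsilon> \<le> chain_pvar p f (map x [1..<Suc m]) powr (1 / p)"
      unfolding chain_pvar_map_upt by linarith
    have "\<epsilon> powr p \<le> (chain_pvar p f (map x [1..<Suc m]) powr (1 / p)) powr p"
      using large \<epsilon> p by (intro powr_mono2) auto
    also have "\<dots> = chain_pvar p f (map x [1..<Suc m])"
      using p by (simp add: powr_powr chain_pvar_conv_sum sum_nonneg del: upt_Suc)
    finally show "\<exists>L. small_valued_chain f \<delta> L \<and> \<epsilon> powr p \<le> chain_pvar p f L"
      using x(1-3) strict_sorted_map_upt[OF x(2)]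
      by (intro exI[of _ "map x [1..<Suc m]"]) (auto simp: small_valued_chain_def simp del: upt_Suc)
  qed
qed

lemma exists_pos_le_powr_bound:
  fixes p C c \<delta> :: real
  assumes "0 < p" "0 \<le> C" "0 < c" "0 < \<delta>"
  obtains \<delta>' where "0 < \<delta>'" "\<delta>' \<le> \<delta>" "C * (2 * \<delta>') powr p \<le> c"
proof
  define \<delta>' where "\<delta>' = min \<delta> ((c / (C + 1)) powr (1 / p) / 2)"
  show "0 < \<delta>'" "\<delta>' \<le> \<delta>" using assms by (auto simp: \<delta>'_def)
  have "(2 * \<delta>') powr p \<le> ((c / (C + 1)) powr (1 / p)) powr p"
    using assms \<open>0 < \<delta>'\<close> by (intro powr_mono2) (auto simp: \<delta>'_def)
  also have "\<dots> = c / (C + 1)"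
    using assms by (simp add: powr_powr)
  finally have "C * (2 * \<delta>') powr p \<le> C * (c / (C + 1))"
    using assms by (intro mult_left_mono) auto
  also have "\<dots> \<le> c"
    using assms by (simp add: field_simps)
  finally show "C * (2 * \<delta>') powr p \<le> c" .
qed

lemma small_valued_chains_with_unbounded_pvar:
  fixes f :: "real \<Rightarrow> 'a::real_normed_vector"
  assumes p: "1 \<le> p" and e: "0 < e"
    and large: "\<And>\<delta>. 0 < \<delta> \<Longrightarrow> \<exists>L. small_valued_chain f \<delta> L \<and> e \<le> chain_pvar p f L"
    and "0 < \<delta>"
  shows "\<exists>L. small_valued_chain f \<delta> L \<and> real k * (e / (2 * (2 powr (p - 1))\<^sup>2)) \<le> chain_pvar p f L"
  using \<open>0 < \<delta>\<close>
proof (induction k arbitrary: \<delta>)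
  case 0
  show ?case by (intro exI[of _ "[]"]) (simp add: small_valued_chain_def)
next
  case (Suc k)
  define c where "c = e / (2 * (2 powr (p - 1))\<^sup>2)"
  obtain A where A: "small_valued_chain f \<delta> A" "e \<le> chain_pvar p f A"
    using large[OF Suc.prems] by blast
  obtain \<delta>' where \<delta>': "0 < \<delta>'" "\<delta>' \<le> \<delta>" "5 * real (length A) * (2 * \<delta>') powr p \<le> c"
    by (rule exists_pos_le_powr_bound[of p "5 * real (length A)" c \<delta>])
      (use p e Suc.prems in \<open>auto simp: c_def\<close>)
  obtain B where B: "small_valued_chain f \<delta>' B" "real k * c \<le> chain_pvar p f B"
    using Suc.IH[OF \<delta>'(1)] unfolding c_def by blast
  obtain M where M: "sorted_wrt (<) M" "set M = set A \<union> set B"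
    using finite_set_strict_sorted[of "set A \<union> set B"] by auto
  have "chain_pvar p f B + chain_pvar p f A / (2 powr (p - 1))\<^sup>2
          - 5 * real (length A) * (2 * \<delta>') powr p \<le> chain_pvar p f M"
    using A(1) B(1) M by (intro chain_pvar_merge_ge p) (auto simp: small_valued_chain_def)
  moreover have "2 * c \<le> chain_pvar p f A / (2 powr (p - 1))\<^sup>2"
    using A(2) by (simp add: c_def divide_right_mono)
  ultimately have "real (Suc k) * c \<le> chain_pvar p f M"
    using B(2) \<delta>'(3) by (simp add: algebra_simps)
  moreover have "small_valued_chain f \<delta> M"
    using A(1) B(1) M \<delta>'(2) by (fastforce simp: small_valued_chain_def)
  ultimately show ?case unfolding c_def by blast
qed

lemma BV_p_imp_small_values_small_pvar:
  fixes f :: "real \<Rightarrow> 'a::real_normed_vector"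
  assumes p: "1 \<le> p" and f: "f \<in> BV_p p"
  shows "small_values_small_pvar p f"
proof (rule ccontr)
  assume "\<not> small_values_small_pvar p f"
  moreover have "0 < p" using p by simp
  ultimately obtain e where e: "0 < e"
    and large: "\<And>\<delta>. 0 < \<delta> \<Longrightarrow> \<exists>L. small_valued_chain f \<delta> L \<and> e \<le> chain_pvar p f L"
    using small_valued_chains_with_large_pvar by blast
  define c where "c = e / (2 * (2 powr (p - 1))\<^sup>2)"
  obtain n :: nat where n: "Var_p p f < ereal (real n)"
    using f less_PInf_Ex_of_nat by (auto simp: BV_p_def)
  obtain k :: nat where k: "real n < real k * c"
    using reals_Archimedean3[of c] e by (auto simp: c_def)
  obtain L where L: "small_valued_chain f 1 L" "real k * c \<le> chain_pvar p f L"
    using small_valued_chains_with_unbounded_pvar[OF p e large zero_less_one, where k = k]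
    unfolding c_def by auto
  have "ereal (chain_pvar p f L) \<le> Var_p p f"
    using L(1) by (intro chain_pvar_le_Var_p) (auto simp: small_valued_chain_def)
  then have "ereal (chain_pvar p f L) < ereal (real n)"
    using n by (rule le_less_trans)
  with k L(2) show False by simp
qed

theorem lemma3p5:
  fixes p :: real
  assumes "1 \<le> p"
  shows "(\<forall>f :: real \<Rightarrow> real. f \<in> BV_p p \<longrightarrow> small_values_small_pvar p f)
       \<and> (\<forall>f :: real \<Rightarrow> complex. f \<in> BV_p p \<longrightarrow> small_values_small_pvar p f)"
  using assms by (auto intro: BV_p_imp_small_values_small_pvar)

end
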